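(* For integers $n\ge 1$, $p\ge 0$, let $\alpha_{n,p}(t)=\sum_j\alpha_{j;n,p}t^j$, where $\alpha_{j;n,p}$ is the number of saturated $n\times p$ tableaux with exactly $j$ marked cells. Then $$\alpha_{n,p}(t)=-n!\sum_{i=0}^n\frac{r_{n-i+1}}{(n-i)!}\sum_{\lambda\vdash i}\frac{(1+P_\lambda(t))^p}{\lambda!}.$$
   Context: An $n\times p$ tableau is a set of marked cells in an $n\times p$ grid; it is saturated if whenever cells $(x,x'),(x,y'),(y,y')$ are marked then $(y,x')$ is marked. $\lambda\vdash i$ ranges over integer partitions $\lambda=[\lambda_1,\dots,\lambda_k]$ of $i$ (for $i=0$ only the empty partition). $P_\lambda(t)=\sum_{j=1}^k t^{\lambda_j}$ (so $P_\emptyset=0$), and $\lambda!=\left(\prod_j\lambda_j!\right)\left(\prod_i\mathrm{mult}_i(\lambda)!\right)$ where $\mathrm{mult}_i(\lambda)$ is the number of parts of $\lambda$ equal to $i$. The $r_k$ are the Rao Uppuluri-Carpenter numbers, defined by $\sum_{k\ge0}r_k\frac{t^k}{k!}=\exp(1-e^t)$, equivalently $r_k=\sum_{j=0}^k(-1)^jS_{k,j}$ with $S_{k,j}$ Stirling numbers of the second kind ($r_0=1,r_1=-1,r_2=0,r_3=1,\dots$). *)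

theory Defs
  imports Complex_Main "HOL-Combinatorics.Stirling" "HOL-Library.Multiset"
begin

text \<open>An n x p tableau: a set of marked cells (row, column) with row < n, column < p.\<close>
definition tableau :: "nat \<Rightarrow> nat \<Rightarrow> (nat \<times> nat) set \<Rightarrow> bool" where
  "tableau n p T \<longleftrightarrow> T \<subseteq> {0..<n} \<times> {0..<p}"

definition saturated :: "(nat \<times> nat) set \<Rightarrow> bool" where
  "saturated T \<longleftrightarrow> (\<forall>x y x' y'. (x, x') \<in> T \<and> (x, y') \<in> T \<and> (y, y') \<in> T \<longrightarrow> (y, x') \<in> T)"

definition alpha_coeff :: "nat \<Rightarrow> nat \<Rightarrow> nat \<Rightarrow> nat" where
  "alpha_coeff j n p = card {T. tableau n p T \<and> saturated T \<and> card T = j}"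

definition alpha_poly :: "nat \<Rightarrow> nat \<Rightarrow> real \<Rightarrow> real" where
  "alpha_poly n p t = (\<Sum>j\<le>n * p. real (alpha_coeff j n p) * t ^ j)"

definition partitions_of :: "nat \<Rightarrow> nat multiset set" where
  "partitions_of i = {lam. (\<forall>x\<in>#lam. 0 < x) \<and> sum_mset lam = i}"

definition P_part :: "nat multiset \<Rightarrow> real \<Rightarrow> real" where
  "P_part lam t = (\<Sum>x\<in>#lam. t ^ x)"

definition part_fact :: "nat multiset \<Rightarrow> nat" where
  "part_fact lam = (\<Prod>x\<in>#lam. fact x) * (\<Prod>x\<in>set_mset lam. fact (count lam x))"

definition ruc :: "nat \<Rightarrow> int" where
  "ruc k = (\<Sum>j\<le>k. (-1) ^ j * int (Stirling k j))"

end

theory Submission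
  imports Defs "HOL-Library.FuncSet"
begin

text \<open>
  Read column by column, a tableau is saturated exactly when any two of its columns, viewed as
  sets of rows, are equal or disjoint. Admit also wild columns of weight c, give a column S the
  weight t^|S|, and let W(X, c) be the weighted number of such column systems on a set X of
  rows; then alpha_{n,p}(t) = W({0..<n}, 0). Splitting off the block {a} \<union> A containing a
  fixed row a and making its columns wild gives
    W(X \<union> {a}, c) = W(X, c) + \<Sum>_{A \<subseteq> X} (W(X - A, c + t^(|A|+1)) - W(X - A, c)),
  with W({}, c) = (1 + c)^p.

  The right-hand side with 1 replaced by 1 + c is the binomial convolution of the sequence
  -r_{j+1} with \<Psi>_i(c) = i! \<Sum>_{\<lambda> \<turnstile> i} (1 + c + P_\<lambda>(t))^p / \<lambda>!. Removing one part from \<lambda>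
  gives \<Psi>_{m+1}(c) = \<Sum>_k (m choose k) \<Psi>_{m-k}(c + t^(k+1)), which together with
  r_{m+1} = -\<Sum>_k (m choose k) r_k yields the same recursion; induction on |X| concludes.
\<close>

section \<open>Binomial convolutions\<close>

lemma sum_atMost_Suc_binomial:
  fixes f :: "nat \<Rightarrow> 'a::comm_semiring_1"
  shows "(\<Sum>k\<le>Suc m. of_nat (Suc m choose k) * f k)
       = (\<Sum>k\<le>m. of_nat (m choose k) * f k) + (\<Sum>k\<le>m. of_nat (m choose k) * f (Suc k))"
proof -
  have shifted: "(\<Sum>k\<le>m. of_nat (m choose k) * f k) = f 0 + (\<Sum>k\<le>m. of_nat (m choose Suc k) * f (Suc k))"
  proof -
    have "(\<Sum>k\<le>m. of_nat (m choose k) * f k) = (\<Sum>k\<le>Suc m. of_nat (m choose k) * f k)"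
      by (simp add: binomial_eq_0)
    also have "\<dots> = f 0 + (\<Sum>k\<le>m. of_nat (m choose Suc k) * f (Suc k))"
      by (subst sum.atMost_Suc_shift) simp
    finally show ?thesis .
  qed
  have "(\<Sum>k\<le>Suc m. of_nat (Suc m choose k) * f k)
      = f 0 + (\<Sum>k\<le>m. of_nat (m choose k) * f (Suc k)) + (\<Sum>k\<le>m. of_nat (m choose Suc k) * f (Suc k))"
    by (subst sum.atMost_Suc_shift) (simp add: sum.distrib algebra_simps)
  then show ?thesis
    using shifted by (simp add: algebra_simps)
qed

lemma sum_atMost_diff_swap:
  fixes F :: "nat \<Rightarrow> nat \<Rightarrow> 'a::comm_monoid_add"
  shows "(\<Sum>i\<le>n. \<Sum>k\<le>n - i. F i k) = (\<Sum>k\<le>n. \<Sum>i\<le>n - k. F i k)"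
proof -
  have "(\<Sum>i\<le>n. \<Sum>k\<in>{k\<in>{..n}. i + k \<le> n}. F i k) = (\<Sum>k\<le>n. \<Sum>i\<in>{i\<in>{..n}. i + k \<le> n}. F i k)"
    by (rule sum.swap_restrict) auto
  moreover have "{k\<in>{..n}. i + k \<le> n} = {..n - i}" if "i \<le> n" for i
    using that by auto
  moreover have "{i\<in>{..n}. i + k \<le> n} = {..n - k}" if "k \<le> n" for k
    using that by auto
  ultimately show ?thesis
    by simp
qed

lemma sum_atMost_triangle_shift:
  fixes G :: "nat \<Rightarrow> nat \<Rightarrow> 'a::comm_monoid_add"
  shows "(\<Sum>i\<le>n. \<Sum>k\<le>i. G i k) = (\<Sum>k\<le>n. \<Sum>j\<le>n - k. G (j + k) k)"
proof -
  have "(\<Sum>i\<le>n. \<Sum>k\<in>{k\<in>{..n}. k \<le> i}. G i k) = (\<Sum>k\<le>n. \<Sum>i\<in>{i\<in>{..n}. k \<le> i}. G i k)"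
    by (rule sum.swap_restrict) auto
  moreover have "{k\<in>{..n}. k \<le> i} = {..i}" if "i \<le> n" for i
    using that by auto
  moreover have "(\<Sum>i\<in>{i\<in>{..n}. k \<le> i}. G i k) = (\<Sum>j\<le>n - k. G (j + k) k)" if "k \<le> n" for k
  proof -
    have "{i\<in>{..n}. k \<le> i} = {k..n}"
      by auto
    then show ?thesis
      using that by (simp add: sum.atLeastAtMost_shift_0 atLeast0AtMost add.commute)
  qed
  ultimately show ?thesis
    by simp
qed

lemma binomial_mult_swap:
  assumes "i + k \<le> n"
  shows "(n choose i) * ((n - i) choose k) = (n choose k) * ((n - k) choose i)"
proof -
  have "(n choose (i + k)) * ((i + k) choose i) = (n choose i) * ((n - i) choose k)"
    using choose_mult[of i "i + k" n] assms by simp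
  moreover have "(n choose (i + k)) * ((i + k) choose k) = (n choose k) * ((n - k) choose i)"
    using choose_mult[of k "i + k" n] assms by simp
  ultimately show ?thesis
    using binomial_symmetric[of i "i + k"] by simp
qed

lemma sum_Pow_card:
  fixes f :: "nat \<Rightarrow> 'a::comm_semiring_1"
  assumes "finite X"
  shows "(\<Sum>A\<in>Pow X. f (card A)) = (\<Sum>k\<le>card X. of_nat (card X choose k) * f k)"
proof -
  have "(\<Sum>A\<in>Pow X. f (card A)) = (\<Sum>k\<le>card X. \<Sum>A\<in>{A \<in> Pow X. card A = k}. f (card A))"
    using assms by (intro sum.group[symmetric]) (auto intro: card_mono)
  also have "\<dots> = (\<Sum>k\<le>card X. of_nat (card X choose k) * f k)"
    using n_subsets[OF assms] by (intro sum.cong refl) simp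
  finally show ?thesis .
qed

definition binomial_conv :: "(nat \<Rightarrow> 'a::comm_ring_1) \<Rightarrow> (nat \<Rightarrow> 'b \<Rightarrow> 'a) \<Rightarrow> nat \<Rightarrow> 'b \<Rightarrow> 'a" where
  "binomial_conv a f n c = (\<Sum>i\<le>n. of_nat (n choose i) * (a (n - i) * f i c))"

lemma binomial_conv_0: "binomial_conv a f 0 c = a 0 * f 0 c"
  by (simp add: binomial_conv_def)

lemma binomial_conv_Suc:
  fixes a :: "nat \<Rightarrow> 'a::comm_ring_1"
  assumes a_Suc: "\<And>m. a (Suc m) = a m - (\<Sum>k\<le>m. of_nat (m choose k) * a (m - k))"
    and f_Suc: "\<And>m c. f (Suc m) c = (\<Sum>k\<le>m. of_nat (m choose k) * f (m - k) (g k c))"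
  shows "binomial_conv a f (Suc n) c = binomial_conv a f n c
    + (\<Sum>k\<le>n. of_nat (n choose k) * (binomial_conv a f (n - k) (g k c) - binomial_conv a f (n - k) c))"
proof -
  have "binomial_conv a f (Suc n) c = (\<Sum>i\<le>n. of_nat (n choose i) * (a (Suc n - i) * f i c))
      + (\<Sum>i\<le>n. of_nat (n choose i) * (a (n - i) * f (Suc i) c))"
    unfolding binomial_conv_def by (subst sum_atMost_Suc_binomial) simp
  also have "(\<Sum>i\<le>n. of_nat (n choose i) * (a (Suc n - i) * f i c))
      = binomial_conv a f n c - (\<Sum>k\<le>n. of_nat (n choose k) * binomial_conv a f (n - k) c)"
  proof -
    have "(\<Sum>i\<le>n. of_nat (n choose i) * (a (Suc n - i) * f i c)) = binomial_conv a f n c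
        - (\<Sum>i\<le>n. \<Sum>k\<le>n - i. of_nat ((n choose i) * ((n - i) choose k)) * (a (n - i - k) * f i c))"
      unfolding binomial_conv_def sum_subtractf[symmetric]
      by (intro sum.cong refl) (simp add: Suc_diff_le a_Suc sum_distrib_left sum_distrib_right algebra_simps)
    also have "(\<Sum>i\<le>n. \<Sum>k\<le>n - i. of_nat ((n choose i) * ((n - i) choose k)) * (a (n - i - k) * f i c))
        = (\<Sum>k\<le>n. of_nat (n choose k) * binomial_conv a f (n - k) c)"
      unfolding binomial_conv_def sum_distrib_left
      by (subst sum_atMost_diff_swap)
        (intro sum.cong refl, simp add: binomial_mult_swap diff_commute mult.assoc add.commute)
    finally show ?thesis .
  qed
  also have "(\<Sum>i\<le>n. of_nat (n choose i) * (a (n - i) * f (Suc i) c))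
      = (\<Sum>k\<le>n. of_nat (n choose k) * binomial_conv a f (n - k) (g k c))"
  proof -
    have "(\<Sum>i\<le>n. of_nat (n choose i) * (a (n - i) * f (Suc i) c))
        = (\<Sum>i\<le>n. \<Sum>k\<le>i. of_nat ((n choose i) * (i choose k)) * (a (n - i) * f (i - k) (g k c)))"
      unfolding f_Suc by (simp add: sum_distrib_left algebra_simps)
    also have "\<dots> = (\<Sum>k\<le>n. of_nat (n choose k) * binomial_conv a f (n - k) (g k c))"
      unfolding sum_atMost_triangle_shift binomial_conv_def sum_distrib_left
      by (intro sum.cong refl) (simp add: choose_mult diff_diff_add mult.assoc add.commute)
    finally show ?thesis .
  qed
  finally show ?thesis
    by (simp add: sum_subtractf algebra_simps)
qed

section \<open>Rao Uppuluri-Carpenter numbers and partitions\<close>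

lemma Stirling_Suc_Suc_eq_sum:
  "Stirling (Suc m) (Suc j) = (\<Sum>k\<le>m. (m choose k) * Stirling k j)"
proof (induction m arbitrary: j)
  case 0
  then show ?case by (cases j) auto
next
  case (Suc m)
  show ?case
  proof (cases j)
    case 0
    have "(\<Sum>k\<le>Suc m. (Suc m choose k) * Stirling k 0) = 1"
      by (subst sum.atMost_Suc_shift) simp
    then show ?thesis
      using 0 by (simp del: Stirling.simps)
  next
    case (Suc i)
    have "(\<Sum>k\<le>m. (m choose k) * Stirling (Suc k) j)
        = j * (\<Sum>k\<le>m. (m choose k) * Stirling k j) + (\<Sum>k\<le>m. (m choose k) * Stirling k i)"
      by (simp add: Suc sum.distrib sum_distrib_left algebra_simps)
    then have "(\<Sum>k\<le>Suc m. (Suc m choose k) * Stirling k j)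
        = Suc j * Stirling (Suc m) (Suc j) + Stirling (Suc m) (Suc i)"
      using sum_atMost_Suc_binomial[of m "\<lambda>k. Stirling k j"] by (simp add: Suc.IH del: Stirling.simps(4))
    then show ?thesis
      by (simp only: Stirling.simps(4) Suc)
  qed
qed

lemma ruc_Suc: "ruc (Suc m) = - (\<Sum>k\<le>m. int (m choose k) * ruc k)"
proof -
  have "ruc (Suc m) = - (\<Sum>j\<le>m. \<Sum>k\<le>m. (-1) ^ j * (int (m choose k) * int (Stirling k j)))"
    unfolding ruc_def
    by (subst sum.atMost_Suc_shift)
      (simp add: Stirling_Suc_Suc_eq_sum sum_distrib_left sum_negf del: Stirling.simps(4))
  also have "\<dots> = - (\<Sum>k\<le>m. int (m choose k) * (\<Sum>j\<le>m. (-1) ^ j * int (Stirling k j)))"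
    by (subst sum.swap) (simp add: sum_distrib_left algebra_simps)
  also have "\<dots> = - (\<Sum>k\<le>m. int (m choose k) * ruc k)"
    unfolding ruc_def
    by (intro arg_cong[where f = uminus] sum.cong refl arg_cong[where f = "(*) _"] sum.mono_neutral_right) auto
  finally show ?thesis .
qed

lemma ruc_Suc_Suc: "ruc (Suc (Suc m)) = ruc (Suc m) - (\<Sum>k\<le>m. int (m choose k) * ruc (Suc (m - k)))"
proof -
  have "(\<Sum>k\<le>m. int (m choose k) * ruc (Suc k)) = (\<Sum>k\<le>m. int (m choose (m - k)) * ruc (Suc (m - k)))"
    using sum.atLeastAtMost_rev[of "\<lambda>k. int (m choose k) * ruc (Suc k)" 0 m] by (simp add: atLeast0AtMost)
  also have "\<dots> = (\<Sum>k\<le>m. int (m choose k) * ruc (Suc (m - k)))"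
    by (intro sum.cong refl) (simp add: binomial_symmetric[symmetric])
  finally show ?thesis
    using ruc_Suc[of "Suc m"] ruc_Suc[of m] sum_atMost_Suc_binomial[of m ruc] by simp
qed

lemma sum_mset_eq_sum_count: "sum_mset M = (\<Sum>x\<in>set_mset M. count M x * x)"
  for M :: "nat multiset"
proof (induction M)
  case (add a M)
  have "(\<Sum>x\<in>set_mset (add_mset a M). count (add_mset a M) x * x)
      = a + (\<Sum>x\<in>set_mset M. count M x * x)"
  proof (cases "a \<in># M")
    case True
    then have "(\<Sum>x\<in>set_mset M. count (add_mset a M) x * x)
        = (\<Sum>x\<in>set_mset M. count M x * x + (if x = a then a else 0))"
      by (intro sum.cong) (auto simp: count_eq_zero_iff)
    with True show ?thesis
      by (simp add: insert_absorb sum.distrib)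
  next
    case False
    moreover from False have "count M a = 0"
      by (simp add: not_in_iff)
    ultimately show ?thesis
      by (auto intro!: sum.cong)
  qed
  with add.IH show ?case
    by simp
qed simp

lemma finite_partitions_of: "finite (partitions_of i)"
proof (rule finite_subset)
  show "partitions_of i \<subseteq> (\<Union>s\<le>i. multisets_of_size {1..i} s)"
  proof
    fix M assume "M \<in> partitions_of i"
    then have pos: "\<forall>x\<in>#M. 0 < x" and sum: "sum_mset M = i"
      by (auto simp: partitions_of_def)
    have "x \<le> i" if "x \<in># M" for x
      using sum that by (metis le_add1 multi_member_split sum_mset.add_mset)
    moreover have "size M \<le> sum_mset M"
      using pos by (induction M) auto
    ultimately show "M \<in> (\<Union>s\<le>i. multisets_of_size {1..i} s)"
      using pos sum by (auto simp: multisets_of_size_def Suc_le_eq)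
  qed
qed auto

lemma partitions_of_0: "partitions_of 0 = {{#}}"
  by (auto simp: partitions_of_def) (metis gr_implies_not0 multiset_nonemptyE)

lemma part_fact_add_mset: "part_fact (add_mset x M) = part_fact M * fact x * Suc (count M x)"
proof (cases "x \<in># M")
  case True
  have "(\<Prod>y\<in>set_mset (add_mset x M). fact (count (add_mset x M) y) :: nat)
      = (\<Prod>y\<in>set_mset M. (if y = x then Suc (count M x) else 1) * fact (count M y))"
    using True by (intro prod.cong) (auto simp: insert_absorb)
  then show ?thesis
    using True by (simp add: part_fact_def prod.distrib algebra_simps)
next
  case False
  then have "(\<Prod>y\<in>set_mset M. fact (count (add_mset x M) y) :: nat) = (\<Prod>y\<in>set_mset M. fact (count M y))"
    by (intro prod.cong) auto
  with False show ?thesis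
    by (simp add: part_fact_def not_in_iff)
qed

lemma divide_part_fact_add_mset:
  fixes y :: real
  shows "count (add_mset (Suc k) mu) (Suc k) * Suc k * y / part_fact (add_mset (Suc k) mu)
    = y / (part_fact mu * fact k)"
proof -
  define c :: real where "c = count (add_mset (Suc k) mu) (Suc k) * Suc k"
  have "c \<noteq> 0"
    unfolding c_def by (simp del: of_nat_mult)
  moreover have "real (part_fact (add_mset (Suc k) mu)) = c * (part_fact mu * fact k)"
    by (simp add: c_def part_fact_add_mset algebra_simps)
  ultimately show ?thesis
    unfolding c_def[symmetric] by simp
qed

lemma bij_betw_add_part:
  "bij_betw (\<lambda>(k, mu). (add_mset (Suc k) mu, Suc k))
     (SIGMA k:{..m}. partitions_of (m - k)) (SIGMA lam:partitions_of (Suc m). set_mset lam)"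
proof -
  have "x - 1 \<le> m \<and> lam - {#x#} \<in> partitions_of (m - (x - 1))"
    if lam: "lam \<in> partitions_of (Suc m)" and x: "x \<in># lam" for lam x
  proof -
    from lam x have "sum_mset lam = x + sum_mset (lam - {#x#})" and "0 < x"
      by (auto simp: partitions_of_def sum_mset.remove)
    with lam x show ?thesis
      by (auto simp: partitions_of_def dest: in_diffD)
  qed
  then show ?thesis
    by (intro bij_betw_byWitness[where f' = "\<lambda>(lam, x). (x - 1, lam - {#x#})"])
      (auto simp: partitions_of_def)
qed

text \<open>
  Write \<open>m + 1\<close> as the sum of the parts of \<open>\<lambda>\<close> and remove the chosen part: its size and
  multiplicity cancel against the corresponding factors of \<open>\<lambda>!\<close>.
\<close>

lemma sum_partitions_of_Suc:
  fixes F :: "nat multiset \<Rightarrow> real"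
  shows "real (Suc m) * (\<Sum>lam\<in>partitions_of (Suc m). F lam / part_fact lam)
    = (\<Sum>k\<le>m. \<Sum>mu\<in>partitions_of (m - k). F (add_mset (Suc k) mu) / (part_fact mu * fact k))"
proof -
  have "real (Suc m) * (\<Sum>lam\<in>partitions_of (Suc m). F lam / part_fact lam)
      = (\<Sum>lam\<in>partitions_of (Suc m). \<Sum>x\<in>set_mset lam. count lam x * x * F lam / part_fact lam)"
    unfolding sum_distrib_left
  proof (intro sum.cong refl)
    fix lam assume "lam \<in> partitions_of (Suc m)"
    then have "Suc m = (\<Sum>x\<in>set_mset lam. count lam x * x)"
      by (simp add: partitions_of_def sum_mset_eq_sum_count)
    then have "real (Suc m) = (\<Sum>x\<in>set_mset lam. real (count lam x * x))"
      by (metis of_nat_sum)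
    then show "real (Suc m) * (F lam / part_fact lam)
        = (\<Sum>x\<in>set_mset lam. count lam x * x * F lam / part_fact lam)"
      by (simp add: sum_distrib_right sum_divide_distrib)
  qed
  also have "\<dots> = (\<Sum>(lam, x)\<in>(SIGMA lam:partitions_of (Suc m). set_mset lam).
      count lam x * x * F lam / part_fact lam)"
    by (rule sum.Sigma) (simp_all add: finite_partitions_of)
  also have "\<dots> = (\<Sum>(k, mu)\<in>(SIGMA k:{..m}. partitions_of (m - k)).
      F (add_mset (Suc k) mu) / (part_fact mu * fact k))"
    by (subst sum.reindex_bij_betw[OF bij_betw_add_part, symmetric])
      (intro sum.cong refl, clarify, rule divide_part_fact_add_mset)
  also have "\<dots> = (\<Sum>k\<le>m. \<Sum>mu\<in>partitions_of (m - k). F (add_mset (Suc k) mu) / (part_fact mu * fact k))"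
    by (rule sum.Sigma[symmetric]) (simp_all add: finite_partitions_of)
  finally show ?thesis .
qed

definition partition_sum :: "nat \<Rightarrow> real \<Rightarrow> nat \<Rightarrow> real \<Rightarrow> real" where
  "partition_sum p t i c = fact i * (\<Sum>lam\<in>partitions_of i. (1 + c + P_part lam t) ^ p / part_fact lam)"

lemma partition_sum_0: "partition_sum p t 0 c = (1 + c) ^ p"
  by (simp add: partition_sum_def partitions_of_0 P_part_def part_fact_def)

lemma partition_sum_Suc:
  "partition_sum p t (Suc m) c = (\<Sum>k\<le>m. of_nat (m choose k) * partition_sum p t (m - k) (c + t ^ Suc k))"
proof -
  define F where "F lam = (1 + c + P_part lam t) ^ p" for lam
  have "partition_sum p t (Suc m) c = fact m * (real (Suc m) * (\<Sum>lam\<in>partitions_of (Suc m). F lam / part_fact lam))"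
    by (simp add: partition_sum_def F_def del: of_nat_Suc)
  also have "\<dots> = (\<Sum>k\<le>m. fact m / fact k * (\<Sum>mu\<in>partitions_of (m - k). F (add_mset (Suc k) mu) / part_fact mu))"
    unfolding sum_partitions_of_Suc by (simp add: sum_distrib_left sum_divide_distrib mult.commute)
  also have "\<dots> = (\<Sum>k\<le>m. of_nat (m choose k) * partition_sum p t (m - k) (c + t ^ Suc k))"
  proof (intro sum.cong refl)
    fix k assume "k \<in> {..m}"
    then have "fact m / fact k = real (m choose k) * fact (m - k)"
      by (simp add: binomial_fact field_simps)
    then show "fact m / fact k * (\<Sum>mu\<in>partitions_of (m - k). F (add_mset (Suc k) mu) / part_fact mu)
        = of_nat (m choose k) * partition_sum p t (m - k) (c + t ^ Suc k)"
      by (simp add: partition_sum_def F_def P_part_def algebra_simps)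
  qed
  finally show ?thesis .
qed

text \<open>The right-hand side of the theorem with \<open>1\<close> generalised to \<open>1 + c\<close>, see \<open>alpha_formula_at_0\<close>.\<close>

definition alpha_formula :: "nat \<Rightarrow> real \<Rightarrow> nat \<Rightarrow> real \<Rightarrow> real" where
  "alpha_formula p t = binomial_conv (\<lambda>j. - of_int (ruc (Suc j))) (partition_sum p t)"

lemma alpha_formula_0: "alpha_formula p t 0 c = (1 + c) ^ p"
proof -
  have "ruc 1 = -1"
    by (simp add: ruc_def)
  then show ?thesis
    by (simp add: alpha_formula_def binomial_conv_0 partition_sum_0)
qed

lemma alpha_formula_Suc:
  "alpha_formula p t (Suc n) c = alpha_formula p t n c
    + (\<Sum>k\<le>n. of_nat (n choose k) * (alpha_formula p t (n - k) (c + t ^ Suc k) - alpha_formula p t (n - k) c))"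
proof -
  have "- real_of_int (ruc (Suc (Suc m)))
      = - real_of_int (ruc (Suc m)) - (\<Sum>k\<le>m. of_nat (m choose k) * - real_of_int (ruc (Suc (m - k))))" for m
    using arg_cong[OF ruc_Suc_Suc[of m], of real_of_int] by (simp add: sum_negf)
  then show ?thesis
    unfolding alpha_formula_def by (intro binomial_conv_Suc partition_sum_Suc)
qed

lemma alpha_formula_at_0:
  "alpha_formula p t n 0 = - fact n * (\<Sum>i\<le>n. of_int (ruc (n - i + 1)) / fact (n - i) *
      (\<Sum>lam\<in>partitions_of i. (1 + P_part lam t) ^ p / real (part_fact lam)))"
  unfolding alpha_formula_def binomial_conv_def partition_sum_def sum_distrib_left
  by (intro sum.cong refl) (simp add: binomial_fact field_simps)

section \<open>Column systems\<close>

text \<open>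
  \<open>None\<close> marks a wild column, weighted by \<open>c\<close> in \<open>column_weight\<close>. Columns beyond \<open>p\<close> are
  fixed to \<open>undefined\<close>, so that \<open>column_systems p X\<close> is finite.
\<close>

type_synonym column_system = "nat \<Rightarrow> nat set option"

definition column_systems :: "nat \<Rightarrow> nat set \<Rightarrow> column_system set" where
  "column_systems p X = {R. (\<forall>y\<ge>p. R y = undefined) \<and> (\<forall>y<p. \<forall>S. R y = Some S \<longrightarrow> S \<subseteq> X) \<and>
     (\<forall>y<p. \<forall>y'<p. \<forall>S S'. R y = Some S \<longrightarrow> R y' = Some S' \<longrightarrow> S = S' \<or> S \<inter> S' = {})}"

fun column_weight :: "real \<Rightarrow> real \<Rightarrow> nat set option \<Rightarrow> real" where
  "column_weight t c None = c"
| "column_weight t c (Some S) = t ^ card S"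

definition weighted_systems :: "nat \<Rightarrow> real \<Rightarrow> nat set \<Rightarrow> real \<Rightarrow> real" where
  "weighted_systems p t X c = (\<Sum>R\<in>column_systems p X. \<Prod>y<p. column_weight t c (R y))"

definition systems_with_block :: "nat \<Rightarrow> nat set \<Rightarrow> nat set \<Rightarrow> column_system set" where
  "systems_with_block p X B = {R \<in> column_systems p X. \<exists>y<p. R y = Some B}"

lemma column_systemsI:
  assumes "\<And>y. p \<le> y \<Longrightarrow> R y = undefined"
    and "\<And>y S. y < p \<Longrightarrow> R y = Some S \<Longrightarrow> S \<subseteq> X"
    and "\<And>y y' S S'. y < p \<Longrightarrow> y' < p \<Longrightarrow> R y = Some S \<Longrightarrow> R y' = Some S' \<Longrightarrow> S = S' \<or> S \<inter> S' = {}"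
  shows "R \<in> column_systems p X"
  using assms unfolding column_systems_def by simp

lemma column_systems_undefined: "R \<in> column_systems p X \<Longrightarrow> p \<le> y \<Longrightarrow> R y = undefined"
  by (simp add: column_systems_def)

lemma column_systems_subset: "R \<in> column_systems p X \<Longrightarrow> y < p \<Longrightarrow> R y = Some S \<Longrightarrow> S \<subseteq> X"
  by (simp add: column_systems_def)

lemma column_systems_eq_or_disjoint:
  "R \<in> column_systems p X \<Longrightarrow> y < p \<Longrightarrow> y' < p \<Longrightarrow> R y = Some S \<Longrightarrow> R y' = Some S' \<Longrightarrow> S = S' \<or> S \<inter> S' = {}"
  by (simp add: column_systems_def)

lemma column_systems_subset_PiE: "column_systems p X \<subseteq> {..<p} \<rightarrow>\<^sub>E insert None (Some ` Pow X)"
proof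
  fix R assume R: "R \<in> column_systems p X"
  show "R \<in> {..<p} \<rightarrow>\<^sub>E insert None (Some ` Pow X)"
  proof (rule PiE_I)
    show "R y \<in> insert None (Some ` Pow X)" if "y \<in> {..<p}" for y
      using R that by (cases "R y") (auto simp: column_systems_def)
    show "R y = undefined" if "y \<notin> {..<p}" for y
      using R that by (auto simp: column_systems_def)
  qed
qed

lemma finite_column_systems: "finite X \<Longrightarrow> finite (column_systems p X)"
  using column_systems_subset_PiE by (rule finite_subset) (auto intro: finite_PiE)

lemma column_systems_mono: "X \<subseteq> Y \<Longrightarrow> column_systems p X \<subseteq> column_systems p Y"
  by (blast intro: column_systemsI dest: column_systems_undefined column_systems_subset column_systems_eq_or_disjoint)

lemma column_systems_empty: "column_systems p {} = {..<p} \<rightarrow>\<^sub>E {None, Some {}}"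
proof
  show "column_systems p {} \<subseteq> {..<p} \<rightarrow>\<^sub>E {None, Some {}}"
    using column_systems_subset_PiE[of p "{}"] by simp
  show "{..<p} \<rightarrow>\<^sub>E {None, Some {}} \<subseteq> column_systems p {}"
  proof
    fix R :: column_system assume R: "R \<in> {..<p} \<rightarrow>\<^sub>E {None, Some {}}"
    then have "R y = undefined" if "p \<le> y" for y
      using that by (auto simp: PiE_iff extensional_def)
    moreover have "S = {}" if "y < p" "R y = Some S" for y S
      using PiE_mem[OF R, of y] that by auto
    ultimately show "R \<in> column_systems p {}"
      by (intro column_systemsI) auto
  qed
qed

lemma weighted_systems_empty: "weighted_systems p t {} c = (1 + c) ^ p"
proof -
  have "(\<Prod>y<p. \<Sum>v\<in>{None, Some {}}. column_weight t c v)
      = (\<Sum>R\<in>{..<p} \<rightarrow>\<^sub>E {None, Some {}}. \<Prod>y<p. column_weight t c (R y))"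
    by (rule prod_sum_PiE) auto
  then show ?thesis
    by (simp add: weighted_systems_def column_systems_empty add.commute)
qed

lemma prod_column_weight_add:
  fixes p :: nat
  shows "(\<Prod>y<p. column_weight t (c + d) (R y))
    = (\<Sum>Z\<in>Pow {y. y < p \<and> R y = None}. d ^ card Z * (\<Prod>y\<in>{..<p} - Z. column_weight t c (R y)))"
proof -
  define N where "N = {y. y < p \<and> R y = None}"
  have N: "N \<subseteq> {..<p}"
    unfolding N_def by auto
  have "finite N"
    using N(1) by (rule finite_subset) simp
  have "(\<Prod>y<p. column_weight t (c + d) (R y))
      = (\<Prod>y\<in>N. d + c) * (\<Prod>y\<in>{..<p} - N. column_weight t c (R y))"
  proof -
    have "(\<Prod>y\<in>{..<p} - N. column_weight t (c + d) (R y)) = (\<Prod>y\<in>{..<p} - N. column_weight t c (R y))"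
      by (intro prod.cong) (auto simp: N_def)
    moreover have "(\<Prod>y\<in>N. column_weight t (c + d) (R y)) = (\<Prod>y\<in>N. d + c)"
      by (intro prod.cong) (auto simp: N_def)
    ultimately show ?thesis
      using prod.subset_diff[OF N(1), of "\<lambda>y. column_weight t (c + d) (R y)"] by (simp add: mult.commute)
  qed
  also have "(\<Prod>y\<in>N. d + c) = (\<Sum>Z\<in>Pow N. d ^ card Z * c ^ card (N - Z))"
    using prod_add[OF \<open>finite N\<close>, of "\<lambda>_. d" "\<lambda>_. c"] by simp
  also have "\<dots> * (\<Prod>y\<in>{..<p} - N. column_weight t c (R y))
      = (\<Sum>Z\<in>Pow N. d ^ card Z * (\<Prod>y\<in>{..<p} - Z. column_weight t c (R y)))"
    unfolding sum_distrib_right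
  proof (intro sum.cong refl)
    fix Z assume "Z \<in> Pow N"
    then have "{..<p} - Z = (N - Z) \<union> ({..<p} - N)" and "(N - Z) \<inter> ({..<p} - N) = {}"
      using N by auto
    moreover have "(\<Prod>y\<in>N - Z. column_weight t c (R y)) = c ^ card (N - Z)"
      by (simp add: N_def)
    ultimately show "d ^ card Z * c ^ card (N - Z) * (\<Prod>y\<in>{..<p} - N. column_weight t c (R y))
        = d ^ card Z * (\<Prod>y\<in>{..<p} - Z. column_weight t c (R y))"
      using \<open>finite N\<close> by (simp add: prod.union_disjoint mult.assoc)
  qed
  finally show ?thesis
    by (simp add: N_def)
qed

definition fill_block :: "nat set \<Rightarrow> column_system \<times> nat set \<Rightarrow> column_system" where
  "fill_block B = (\<lambda>(R, Z) y. if y \<in> Z then Some B else R y)"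

text \<open>The guard \<open>y < p\<close> is needed because \<open>undefined\<close> might be \<open>Some B\<close>.\<close>

definition remove_block :: "nat \<Rightarrow> nat set \<Rightarrow> column_system \<Rightarrow> column_system \<times> nat set" where
  "remove_block p B R = (\<lambda>y. if y < p \<and> R y = Some B then None else R y, {y. y < p \<and> R y = Some B})"

lemma fill_block_in_systems_with_block:
  assumes R: "R \<in> column_systems p Y" and B: "B \<inter> Y = {}"
    and Z: "Z \<subseteq> {y. y < p \<and> R y = None}" "Z \<noteq> {}"
  shows "fill_block B (R, Z) \<in> systems_with_block p (B \<union> Y) B"
proof -
  have "fill_block B (R, Z) \<in> column_systems p (B \<union> Y)"
  proof (rule column_systemsI)
    show "fill_block B (R, Z) y = undefined" if "p \<le> y" for y
      using Z(1) that column_systems_undefined[OF R] by (auto simp: fill_block_def)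
    show "S \<subseteq> B \<union> Y" if "y < p" "fill_block B (R, Z) y = Some S" for y S
      using that column_systems_subset[OF R] by (auto simp: fill_block_def split: if_splits)
    show "S = S' \<or> S \<inter> S' = {}"
      if "y < p" "y' < p" "fill_block B (R, Z) y = Some S" "fill_block B (R, Z) y' = Some S'" for y y' S S'
      using that B column_systems_subset[OF R] column_systems_eq_or_disjoint[OF R]
      by (auto simp: fill_block_def split: if_splits)
  qed
  moreover obtain y where "y \<in> Z"
    using Z(2) by blast
  ultimately show ?thesis
    using Z(1) by (auto simp: systems_with_block_def fill_block_def)
qed

lemma remove_block_in_column_systems:
  assumes R: "R \<in> systems_with_block p (B \<union> Y) B" and B: "B \<inter> Y = {}"
  shows "remove_block p B R \<in> (SIGMA R':column_systems p Y. Pow {y. y < p \<and> R' y = None} - {{}})"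
proof -
  from R have R_sys: "R \<in> column_systems p (B \<union> Y)" and "\<exists>y<p. R y = Some B"
    by (auto simp: systems_with_block_def)
  let ?R' = "\<lambda>y. if y < p \<and> R y = Some B then None else R y"
  have "?R' \<in> column_systems p Y"
  proof (rule column_systemsI)
    show "?R' y = undefined" if "p \<le> y" for y
      using that column_systems_undefined[OF R_sys] by simp
    show "S \<subseteq> Y" if "y < p" "?R' y = Some S" for y S
    proof -
      obtain y0 where y0: "y0 < p" "R y0 = Some B"
        using \<open>\<exists>y<p. R y = Some B\<close> by blast
      from that have RS: "R y = Some S" and "S \<noteq> B"
        by (auto split: if_splits)
      then have "S \<inter> B = {}"
        using column_systems_eq_or_disjoint[OF R_sys \<open>y < p\<close> y0(1) RS y0(2)] by blast
      with column_systems_subset[OF R_sys \<open>y < p\<close> RS] show ?thesis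
        by blast
    qed
    show "S = S' \<or> S \<inter> S' = {}" if "y < p" "y' < p" "?R' y = Some S" "?R' y' = Some S'" for y y' S S'
      using that column_systems_eq_or_disjoint[OF R_sys] by (auto split: if_splits)
  qed
  with \<open>\<exists>y<p. R y = Some B\<close> show ?thesis
    by (auto simp: remove_block_def)
qed

lemma fill_block_remove_block: "fill_block B (remove_block p B R) = R"
  by (auto simp: fill_block_def remove_block_def)

lemma remove_block_fill_block:
  assumes "R \<in> column_systems p Y" "B \<noteq> {}" "B \<inter> Y = {}" "Z \<subseteq> {y. y < p \<and> R y = None}"
  shows "remove_block p B (fill_block B (R, Z)) = (R, Z)"
proof -
  have "R y \<noteq> Some B" if "y < p" for y
    using column_systems_subset[OF assms(1) that] assms(2,3) by auto
  with assms(4) show ?thesis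
    by (auto simp: fill_block_def remove_block_def fun_eq_iff)
qed

lemma bij_betw_fill_block:
  assumes "B \<noteq> {}" "B \<inter> Y = {}"
  shows "bij_betw (fill_block B)
    (SIGMA R:column_systems p Y. Pow {y. y < p \<and> R y = None} - {{}})
    (systems_with_block p (B \<union> Y) B)"
proof (rule bij_betw_byWitness[where f' = "remove_block p B"])
  show "\<forall>x\<in>(SIGMA R:column_systems p Y. Pow {y. y < p \<and> R y = None} - {{}}).
      remove_block p B (fill_block B x) = x"
    using remove_block_fill_block assms by auto
  show "\<forall>R\<in>systems_with_block p (B \<union> Y) B. fill_block B (remove_block p B R) = R"
    by (simp add: fill_block_remove_block)
  show "fill_block B ` (SIGMA R:column_systems p Y. Pow {y. y < p \<and> R y = None} - {{}})
      \<subseteq> systems_with_block p (B \<union> Y) B"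
    using assms(2) by (auto intro!: fill_block_in_systems_with_block)
  show "remove_block p B ` systems_with_block p (B \<union> Y) B
      \<subseteq> (SIGMA R:column_systems p Y. Pow {y. y < p \<and> R y = None} - {{}})"
    using remove_block_in_column_systems assms(2) by blast
qed

lemma prod_column_weight_fill_block:
  assumes "Z \<subseteq> {y. y < p \<and> R y = None}"
  shows "(\<Prod>y<p. column_weight t c (fill_block B (R, Z) y))
    = (t ^ card B) ^ card Z * (\<Prod>y\<in>{..<p} - Z. column_weight t c (R y))"
proof -
  have Z: "Z \<subseteq> {..<p}"
    using assms by auto
  have "(\<Prod>y<p. column_weight t c (fill_block B (R, Z) y))
      = (\<Prod>y\<in>{..<p} - Z. column_weight t c (fill_block B (R, Z) y))
        * (\<Prod>y\<in>Z. column_weight t c (fill_block B (R, Z) y))"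
    using prod.subset_diff[OF Z] by blast
  also have "\<dots> = (\<Prod>y\<in>{..<p} - Z. column_weight t c (R y)) * (t ^ card B) ^ card Z"
    by (simp add: fill_block_def)
  finally show ?thesis
    by (simp add: mult.commute)
qed

text \<open>
  Making the columns equal to \<open>B\<close> wild is a bijection onto the systems on \<open>Y\<close> with a nonempty
  set of marked wild columns; expanding \<open>(c + t^|B|)\<close> over the wild columns counts these.
\<close>

lemma sum_systems_with_block:
  assumes "finite Y" "B \<noteq> {}" "B \<inter> Y = {}"
  shows "(\<Sum>R\<in>systems_with_block p (B \<union> Y) B. \<Prod>y<p. column_weight t c (R y))
    = weighted_systems p t Y (c + t ^ card B) - weighted_systems p t Y c"
proof -
  let ?N = "\<lambda>R. {y. y < p \<and> R y = None}"
  let ?w = "\<lambda>R Z. (t ^ card B) ^ card Z * (\<Prod>y\<in>{..<p} - Z. column_weight t c (R y))"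
  have "weighted_systems p t Y (c + t ^ card B) = (\<Sum>R\<in>column_systems p Y. \<Sum>Z\<in>Pow (?N R). ?w R Z)"
    unfolding weighted_systems_def prod_column_weight_add ..
  also have "\<dots> = weighted_systems p t Y c + (\<Sum>R\<in>column_systems p Y. \<Sum>Z\<in>Pow (?N R) - {{}}. ?w R Z)"
  proof -
    have "(\<Sum>Z\<in>Pow (?N R). ?w R Z)
        = (\<Prod>y<p. column_weight t c (R y)) + (\<Sum>Z\<in>Pow (?N R) - {{}}. ?w R Z)" for R
      by (subst sum.remove[of _ "{}"]) auto
    then show ?thesis
      by (simp add: weighted_systems_def sum.distrib)
  qed
  also have "(\<Sum>R\<in>column_systems p Y. \<Sum>Z\<in>Pow (?N R) - {{}}. ?w R Z)
      = (\<Sum>(R, Z)\<in>(SIGMA R:column_systems p Y. Pow (?N R) - {{}}). ?w R Z)"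
    by (rule sum.Sigma) (auto simp: finite_column_systems assms(1))
  also have "\<dots> = (\<Sum>x\<in>(SIGMA R:column_systems p Y. Pow (?N R) - {{}}).
      \<Prod>y<p. column_weight t c (fill_block B x y))"
    by (intro sum.cong refl) (auto simp: prod_column_weight_fill_block)
  also have "\<dots> = (\<Sum>R\<in>systems_with_block p (B \<union> Y) B. \<Prod>y<p. column_weight t c (R y))"
    by (rule sum.reindex_bij_betw[OF bij_betw_fill_block[OF assms(2,3)]])
  finally show ?thesis
    by simp
qed

lemma column_systems_insert:
  assumes "a \<notin> X"
  shows "column_systems p (insert a X)
    = column_systems p X \<union> (\<Union>A\<in>Pow X. systems_with_block p (insert a X) (insert a A))"
proof
  show "column_systems p (insert a X)
      \<subseteq> column_systems p X \<union> (\<Union>A\<in>Pow X. systems_with_block p (insert a X) (insert a A))"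
  proof
    fix R assume R: "R \<in> column_systems p (insert a X)"
    show "R \<in> column_systems p X \<union> (\<Union>A\<in>Pow X. systems_with_block p (insert a X) (insert a A))"
    proof (cases "\<exists>y<p. \<exists>S. R y = Some S \<and> a \<in> S")
      case True
      then obtain y S where y: "y < p" "R y = Some S" "a \<in> S"
        by blast
      then have "S - {a} \<in> Pow X" and S: "insert a (S - {a}) = S"
        using column_systems_subset[OF R] by auto
      moreover have "R \<in> systems_with_block p (insert a X) (insert a (S - {a}))"
        unfolding S using R y by (auto simp: systems_with_block_def)
      ultimately show ?thesis
        by blast
    next
      case False
      have "R \<in> column_systems p X"
      proof (rule column_systemsI)
        show "R y = undefined" if "p \<le> y" for y
          using column_systems_undefined[OF R that] .
        show "S \<subseteq> X" if "y < p" "R y = Some S" for y S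
          using column_systems_subset[OF R that] False that by blast
        show "S = S' \<or> S \<inter> S' = {}" if "y < p" "y' < p" "R y = Some S" "R y' = Some S'" for y y' S S'
          using column_systems_eq_or_disjoint[OF R that] .
      qed
      then show ?thesis
        by blast
    qed
  qed
  show "column_systems p X \<union> (\<Union>A\<in>Pow X. systems_with_block p (insert a X) (insert a A))
      \<subseteq> column_systems p (insert a X)"
    using column_systems_mono[of X "insert a X" p] by (auto simp: systems_with_block_def)
qed

lemma column_systems_disjoint_systems_with_block:
  assumes "a \<notin> X"
  shows "column_systems p X \<inter> systems_with_block p Y (insert a A) = {}"
proof -
  have "R y \<noteq> Some (insert a A)" if "R \<in> column_systems p X" "y < p" for R y
    using column_systems_subset[OF that] assms by blast
  then show ?thesis
    by (auto simp: systems_with_block_def)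
qed

lemma systems_with_block_disjoint:
  assumes "A \<noteq> A'" "a \<notin> A" "a \<notin> A'"
  shows "systems_with_block p Y (insert a A) \<inter> systems_with_block p Y (insert a A') = {}"
proof -
  have "insert a A \<noteq> insert a A'" and "insert a A \<inter> insert a A' \<noteq> {}"
    using assms by (auto simp: insert_ident)
  then have "\<not> (R y = Some (insert a A) \<and> R y' = Some (insert a A'))"
    if "R \<in> column_systems p Y" "y < p" "y' < p" for R y y'
    using column_systems_eq_or_disjoint[OF that] by blast
  then show ?thesis
    by (auto simp: systems_with_block_def)
qed

lemma weighted_systems_insert:
  assumes "finite X" "a \<notin> X"
  shows "weighted_systems p t (insert a X) c = weighted_systems p t X c
    + (\<Sum>A\<in>Pow X. weighted_systems p t (X - A) (c + t ^ Suc (card A)) - weighted_systems p t (X - A) c)"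
proof -
  let ?w = "\<lambda>R. \<Prod>y<p. column_weight t c (R y)"
  let ?blocks = "\<lambda>A. systems_with_block p (insert a X) (insert a A)"
  have fin: "finite (?blocks A)" for A
    using finite_column_systems[of "insert a X" p] assms(1) by (auto simp: systems_with_block_def)
  have "weighted_systems p t (insert a X) c = weighted_systems p t X c + sum ?w (\<Union>A\<in>Pow X. ?blocks A)"
    unfolding weighted_systems_def column_systems_insert[OF assms(2)]
    using assms fin column_systems_disjoint_systems_with_block[OF assms(2)]
    by (subst sum.union_disjoint) (auto simp: finite_column_systems disjoint_iff)
  also have "sum ?w (\<Union>A\<in>Pow X. ?blocks A) = (\<Sum>A\<in>Pow X. sum ?w (?blocks A))"
  proof (rule sum.UNION_disjoint)
    show "\<forall>A\<in>Pow X. \<forall>A'\<in>Pow X. A \<noteq> A' \<longrightarrow> ?blocks A \<inter> ?blocks A' = {}"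
      using assms(2) by (intro ballI impI systems_with_block_disjoint) auto
  qed (use assms fin in auto)
  also have "\<dots> = (\<Sum>A\<in>Pow X. weighted_systems p t (X - A) (c + t ^ Suc (card A)) - weighted_systems p t (X - A) c)"
  proof (intro sum.cong refl)
    fix A assume "A \<in> Pow X"
    then have "a \<notin> A" "finite A" and XA: "insert a A \<union> (X - A) = insert a X"
      using assms finite_subset[of A X] by auto
    then have "card (insert a A) = Suc (card A)"
      by simp
    with XA show "sum ?w (?blocks A)
        = weighted_systems p t (X - A) (c + t ^ Suc (card A)) - weighted_systems p t (X - A) c"
      using sum_systems_with_block[where Y = "X - A" and B = "insert a A"] assms by auto
  qed
  finally show ?thesis .
qed

lemma weighted_systems_eq_alpha_formula:
  assumes "finite X"
  shows "weighted_systems p t X c = alpha_formula p t (card X) c"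
  using assms
proof (induction "card X" arbitrary: X c rule: less_induct)
  case less
  show ?case
  proof (cases "X = {}")
    case True
    then show ?thesis
      by (simp add: weighted_systems_empty alpha_formula_0)
  next
    case False
    then obtain a where "a \<in> X"
      by blast
    define X0 where "X0 = X - {a}"
    have X: "X = insert a X0" "a \<notin> X0"
      using \<open>a \<in> X\<close> by (auto simp: X0_def)
    have fin: "finite X0" and card_X: "card X = Suc (card X0)"
      using less.prems X by auto
    have IH: "weighted_systems p t (X0 - A) c' = alpha_formula p t (card X0 - card A) c'" if "A \<subseteq> X0" for A c'
    proof -
      have "card (X0 - A) < card X"
        using card_X card_mono[OF fin, of "X0 - A"] by auto
      then show ?thesis
        using less.hyps[of "X0 - A" c'] fin that by (simp add: card_Diff_subset finite_subset)
    qed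
    let ?f = "\<lambda>k. alpha_formula p t (card X0 - k) (c + t ^ Suc k) - alpha_formula p t (card X0 - k) c"
    have "weighted_systems p t X c = weighted_systems p t X0 c
        + (\<Sum>A\<in>Pow X0. weighted_systems p t (X0 - A) (c + t ^ Suc (card A)) - weighted_systems p t (X0 - A) c)"
      unfolding X(1) by (rule weighted_systems_insert[OF fin X(2)])
    also have "\<dots> = alpha_formula p t (card X0) c + (\<Sum>A\<in>Pow X0. ?f (card A))"
      using IH[of "{}"] by (simp add: IH)
    also have "\<dots> = alpha_formula p t (card X) c"
      unfolding card_X alpha_formula_Suc using sum_Pow_card[OF fin, of ?f] by simp
    finally show ?thesis .
  qed
qed

section \<open>Saturated tableaux\<close>

lemma saturated_iff_columns_eq_or_disjoint:
  "saturated T \<longleftrightarrow>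
    (\<forall>y y'. {x. (x, y) \<in> T} = {x. (x, y') \<in> T} \<or> {x. (x, y) \<in> T} \<inter> {x. (x, y') \<in> T} = {})"
proof
  assume sat: "saturated T"
  show "\<forall>y y'. {x. (x, y) \<in> T} = {x. (x, y') \<in> T} \<or> {x. (x, y) \<in> T} \<inter> {x. (x, y') \<in> T} = {}"
  proof (intro allI disjCI)
    fix y y' assume "{x. (x, y) \<in> T} \<inter> {x. (x, y') \<in> T} \<noteq> {}"
    then obtain x where "(x, y) \<in> T" "(x, y') \<in> T"
      by blast
    note sat' = sat[unfolded saturated_def, rule_format]
    have "(z, y') \<in> T \<longleftrightarrow> (z, y) \<in> T" for z
      using sat'[of x y' y z] sat'[of x y y' z] \<open>(x, y) \<in> T\<close> \<open>(x, y') \<in> T\<close> by blast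
    then show "{x. (x, y) \<in> T} = {x. (x, y') \<in> T}"
      by blast
  qed
next
  assume cols: "\<forall>y y'. {x. (x, y) \<in> T} = {x. (x, y') \<in> T} \<or> {x. (x, y) \<in> T} \<inter> {x. (x, y') \<in> T} = {}"
  show "saturated T"
    unfolding saturated_def
  proof (intro allI impI)
    fix x y x' y' assume "(x, x') \<in> T \<and> (x, y') \<in> T \<and> (y, y') \<in> T"
    moreover from this have "{z. (z, x') \<in> T} = {z. (z, y') \<in> T}"
      using cols by blast
    ultimately show "(y, x') \<in> T"
      by blast
  qed
qed

lemma card_eq_sum_columns:
  fixes T :: "('a \<times> nat) set"
  assumes "finite T" "T \<subseteq> UNIV \<times> {..<p}"
  shows "card T = (\<Sum>y<p. card {x. (x, y) \<in> T})"
proof -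
  define S where "S = (SIGMA y:{..<p}. {x. (x, y) \<in> T})"
  have "T = prod.swap ` S"
    using assms(2) by (force simp: S_def)
  then have "card T = card S"
    by (simp add: card_image)
  moreover have "finite {x. (x, y) \<in> T}" for y
    using finite_imageI[OF assms(1), of fst] by (rule finite_subset[rotated]) force
  ultimately show ?thesis
    by (simp add: S_def)
qed

lemma alpha_poly_eq_sum_tableaux:
  "alpha_poly n p t = (\<Sum>T\<in>{T. tableau n p T \<and> saturated T}. t ^ card T)"
proof -
  let ?Tabs = "{T. tableau n p T \<and> saturated T}"
  have fin: "finite ?Tabs"
    by (rule finite_subset[of _ "Pow ({0..<n} \<times> {0..<p})"]) (auto simp: tableau_def)
  have "card T \<le> n * p" if "T \<in> ?Tabs" for T
    using that card_mono[of "{0..<n} \<times> {0..<p}" T] by (auto simp: tableau_def card_cartesian_product)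
  then have "(\<Sum>T\<in>?Tabs. t ^ card T) = (\<Sum>j\<le>n * p. \<Sum>T\<in>{T \<in> ?Tabs. card T = j}. t ^ card T)"
    using fin by (intro sum.group[symmetric]) auto
  also have "\<dots> = alpha_poly n p t"
    unfolding alpha_poly_def alpha_coeff_def by (intro sum.cong refl) simp
  finally show ?thesis ..
qed

definition tableau_columns :: "nat \<Rightarrow> (nat \<times> nat) set \<Rightarrow> column_system" where
  "tableau_columns p T y = (if y < p then Some {x. (x, y) \<in> T} else undefined)"

definition tableau_of_columns :: "nat \<Rightarrow> column_system \<Rightarrow> (nat \<times> nat) set" where
  "tableau_of_columns p R = {(x, y). y < p \<and> x \<in> the (R y)}"

lemma tableau_columns_in_column_systems:
  assumes "tableau n p T" "saturated T"
  shows "tableau_columns p T \<in> column_systems p {0..<n}"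
proof (rule column_systemsI)
  show "tableau_columns p T y = undefined" if "p \<le> y" for y
    using that by (simp add: tableau_columns_def)
  show "S \<subseteq> {0..<n}" if "y < p" "tableau_columns p T y = Some S" for y S
    using that assms(1) by (auto simp: tableau_columns_def tableau_def)
  show "S = S' \<or> S \<inter> S' = {}"
    if "y < p" "y' < p" "tableau_columns p T y = Some S" "tableau_columns p T y' = Some S'" for y y' S S'
    using that assms(2) by (auto simp: tableau_columns_def saturated_iff_columns_eq_or_disjoint)
qed

lemma tableau_of_columns_saturated:
  assumes R: "R \<in> column_systems p {0..<n}" and "\<forall>y<p. R y \<noteq> None"
  shows "tableau n p (tableau_of_columns p R)" "saturated (tableau_of_columns p R)"
proof -
  have R_some: "R y = Some (the (R y))" if "y < p" for y
    using assms(2) that by simp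
  show "tableau n p (tableau_of_columns p R)"
    using column_systems_subset[OF R _ R_some] by (auto simp: tableau_def tableau_of_columns_def)
  have cols: "{x. (x, y) \<in> tableau_of_columns p R} = (if y < p then the (R y) else {})" for y
    by (auto simp: tableau_of_columns_def)
  show "saturated (tableau_of_columns p R)"
    unfolding saturated_iff_columns_eq_or_disjoint cols
    using column_systems_eq_or_disjoint[OF R _ _ R_some R_some] by auto
qed

lemma bij_betw_tableau_columns:
  "bij_betw (tableau_columns p) {T. tableau n p T \<and> saturated T}
    {R \<in> column_systems p {0..<n}. \<forall>y<p. R y \<noteq> None}"
proof (rule bij_betw_byWitness[where f' = "tableau_of_columns p"])
  show "\<forall>T\<in>{T. tableau n p T \<and> saturated T}. tableau_of_columns p (tableau_columns p T) = T"
    by (auto simp: tableau_of_columns_def tableau_columns_def tableau_def)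
  show "\<forall>R\<in>{R \<in> column_systems p {0..<n}. \<forall>y<p. R y \<noteq> None}.
      tableau_columns p (tableau_of_columns p R) = R"
    by (auto simp: tableau_of_columns_def tableau_columns_def fun_eq_iff column_systems_undefined)
  show "tableau_columns p ` {T. tableau n p T \<and> saturated T}
      \<subseteq> {R \<in> column_systems p {0..<n}. \<forall>y<p. R y \<noteq> None}"
    by (auto simp: tableau_columns_in_column_systems) (simp add: tableau_columns_def)
  show "tableau_of_columns p ` {R \<in> column_systems p {0..<n}. \<forall>y<p. R y \<noteq> None}
      \<subseteq> {T. tableau n p T \<and> saturated T}"
    using tableau_of_columns_saturated by blast
qed

lemma weighted_systems_eq_alpha_poly: "weighted_systems p t {0..<n} 0 = alpha_poly n p t"
proof -
  let ?full = "{R \<in> column_systems p {0..<n}. \<forall>y<p. R y \<noteq> None}"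
  have "weighted_systems p t {0..<n} 0 = (\<Sum>R\<in>?full. \<Prod>y<p. column_weight t 0 (R y))"
    unfolding weighted_systems_def
  proof (rule sum.mono_neutral_right)
    show "\<forall>R\<in>column_systems p {0..<n} - ?full. (\<Prod>y<p. column_weight t 0 (R y)) = 0"
    proof
      fix R assume "R \<in> column_systems p {0..<n} - ?full"
      then obtain y where "y < p" "R y = None"
        by blast
      then show "(\<Prod>y<p. column_weight t 0 (R y)) = 0"
        by (intro prod_zero) (auto intro!: bexI[of _ y])
    qed
  qed (auto simp: finite_column_systems)
  also have "\<dots> = (\<Sum>T\<in>{T. tableau n p T \<and> saturated T}.
      \<Prod>y<p. column_weight t 0 (tableau_columns p T y))"
    by (rule sum.reindex_bij_betw[OF bij_betw_tableau_columns, symmetric])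
  also have "\<dots> = (\<Sum>T\<in>{T. tableau n p T \<and> saturated T}. t ^ card T)"
  proof (intro sum.cong refl)
    fix T assume "T \<in> {T. tableau n p T \<and> saturated T}"
    then have "finite T" "T \<subseteq> UNIV \<times> {..<p}"
      by (auto simp: tableau_def intro: finite_subset[of _ "{0..<n} \<times> {0..<p}"])
    then show "(\<Prod>y<p. column_weight t 0 (tableau_columns p T y)) = t ^ card T"
      by (simp add: card_eq_sum_columns tableau_columns_def power_sum)
  qed
  also have "\<dots> = alpha_poly n p t"
    by (rule alpha_poly_eq_sum_tableaux[symmetric])
  finally show ?thesis .
qed

theorem theorem2:
  fixes n p :: nat and t :: real
  assumes "n \<ge> 1"
  shows "alpha_poly n p t =
    - fact n * (\<Sum>i\<le>n. of_int (ruc (n - i + 1)) / fact (n - i) *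
        (\<Sum>lam\<in>partitions_of i. (1 + P_part lam t) ^ p / real (part_fact lam)))"
proof -
  have "alpha_poly n p t = weighted_systems p t {0..<n} 0"
    by (rule weighted_systems_eq_alpha_poly[symmetric])
  also have "\<dots> = alpha_formula p t n 0"
    by (simp add: weighted_systems_eq_alpha_formula)
  also have "\<dots> = - fact n * (\<Sum>i\<le>n. of_int (ruc (n - i + 1)) / fact (n - i) *
      (\<Sum>lam\<in>partitions_of i. (1 + P_part lam t) ^ p / real (part_fact lam)))"
    by (rule alpha_formula_at_0)
  finally show ?thesis .
qed

end
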